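(* Let $G$ be a nonabelian torsion-free nilpotent group with an involution $\ast$. Then $G$ contains a $\ast$-invariant Heisenberg subgroup; more precisely, there exist $x,y\in G$ such that $[x,y]\neq1$, $[x,[x,y]]=[y,[x,y]]=1$, $x^\ast\in\{x,x^{-1}\}$ and $y^\ast\in\{y,y^{-1}\}$.
   Context: An involution on a group is an anti-automorphism of order $2$. Commutators are $[x,y]=x^{-1}y^{-1}xy$. *)

theory Defs
  imports "HOL-Algebra.Algebra"
begin

definition comm :: "('a, 'b) monoid_scheme \<Rightarrow> 'a \<Rightarrow> 'a \<Rightarrow> 'a" where
  "comm G x y = inv\<^bsub>G\<^esub> x \<otimes>\<^bsub>G\<^esub> inv\<^bsub>G\<^esub> y \<otimes>\<^bsub>G\<^esub> x \<otimes>\<^bsub>G\<^esub> y"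

text \<open>Lower central series: gamma_1 = G, gamma_{i+1} = [G, gamma_i]
  (the subgroup generated by commutators). Index 0 here is gamma_1.\<close>
fun lower_central :: "('a, 'b) monoid_scheme \<Rightarrow> nat \<Rightarrow> 'a set" where
  "lower_central G 0 = carrier G"
| "lower_central G (Suc n) =
     generate G {comm G g h | g h. g \<in> carrier G \<and> h \<in> lower_central G n}"

definition nilpotent_group :: "('a, 'b) monoid_scheme \<Rightarrow> bool" where
  "nilpotent_group G \<longleftrightarrow> group G \<and> (\<exists>n. lower_central G n = {\<one>\<^bsub>G\<^esub>})"

definition torsion_free_group :: "('a, 'b) monoid_scheme \<Rightarrow> bool" where
  "torsion_free_group G \<longleftrightarrow> group G \<and>
     (\<forall>x \<in> carrier G. \<forall>n::nat. n > 0 \<longrightarrow> x [^]\<^bsub>G\<^esub> n = \<one>\<^bsub>G\<^esub> \<longrightarrow> x = \<one>\<^bsub>G\<^esub>)"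

definition involution :: "('a, 'b) monoid_scheme \<Rightarrow> ('a \<Rightarrow> 'a) \<Rightarrow> bool" where
  "involution G s \<longleftrightarrow>
     s \<in> carrier G \<rightarrow> carrier G \<and>
     bij_betw s (carrier G) (carrier G) \<and>
     (\<forall>x \<in> carrier G. \<forall>y \<in> carrier G. s (x \<otimes>\<^bsub>G\<^esub> y) = s y \<otimes>\<^bsub>G\<^esub> s x) \<and>
     (\<forall>x \<in> carrier G. s (s x) = x) \<and>
     (\<exists>x \<in> carrier G. s x \<noteq> x)"

end

theory Submission
  imports Defs
begin

text \<open>Put \<open>\<sigma> x = (x\<^sup>*)\<inverse>\<close>, an automorphism with \<open>\<sigma>\<^sup>2 = 1\<close>; then \<open>x\<^sup>* = x\<inverse>\<close> iff \<open>\<sigma> x = x\<close>,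
  and \<open>h h\<^sup>*\<close> is always \<open>*\<close>-fixed. Let \<open>f\<close> be a homomorphism from a \<open>\<sigma>\<close>-stable subgroup \<open>H\<close>
  into the centre with \<open>f h \<noteq> 1\<close>. If \<open>f (h h\<^sup>*) = 1\<close> then \<open>f (\<sigma> h) = f h\<close>, and the iterates
  \<open>t\<^sub>0 = h\<close>, \<open>t\<^sub>k\<^sub>+\<^sub>1 = t\<^sub>k \<sigma>(t\<^sub>k)\<close> satisfy \<open>f t\<^sub>k = (f h)\<^bsup>2^k\<^esup>\<close>, which is \<open>\<noteq> 1\<close> by
  torsion-freeness, while \<open>t\<^sub>k\<inverse> \<sigma>(t\<^sub>k)\<close> lies in the \<open>k\<close>-th term of the lower central series,
  so \<open>t\<^sub>k\<close> is \<open>\<sigma>\<close>-fixed for large \<open>k\<close>. Either way \<open>H\<close> has a \<open>*\<close>-stable element outside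
  the kernel of \<open>f\<close>. Applied to the second centre with \<open>f = [g, -]\<close> this gives a \<open>*\<close>-stable
  non-central \<open>y\<close> of the second centre, and applied to \<open>G\<close> with \<open>f = [-, y]\<close> the \<open>*\<close>-stable \<open>x\<close>;
  \<open>[x, y]\<close> is then central.\<close>

context group
begin

definition center :: "'a set" where
  "center = {z \<in> carrier G. \<forall>g \<in> carrier G. g \<otimes> z = z \<otimes> g}"

definition second_center :: "'a set" where
  "second_center = {y \<in> carrier G. \<forall>g \<in> carrier G. comm G g y \<in> center}"

lemma center_subset_carrier: "center \<subseteq> carrier G"
  by (auto simp: center_def)

lemma center_commute: "z \<in> center \<Longrightarrow> g \<in> carrier G \<Longrightarrow> g \<otimes> z = z \<otimes> g"
  by (simp add: center_def)

lemma one_in_center: "\<one> \<in> center"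
  by (simp add: center_def)

lemma center_mult:
  assumes z: "z \<in> center" and w: "w \<in> center" shows "z \<otimes> w \<in> center"
proof -
  have zc: "z \<in> carrier G" and wc: "w \<in> carrier G" using z w by (auto simp: center_def)
  have "g \<otimes> (z \<otimes> w) = z \<otimes> w \<otimes> g" if g: "g \<in> carrier G" for g
  proof -
    have "g \<otimes> (z \<otimes> w) = z \<otimes> g \<otimes> w"
      using center_commute[OF z g] g zc wc by (simp add: m_assoc[symmetric])
    also have "\<dots> = z \<otimes> w \<otimes> g"
      using center_commute[OF w g] g zc wc by (simp add: m_assoc)
    finally show ?thesis .
  qed
  then show ?thesis using zc wc by (simp add: center_def)
qed

lemma center_inv:
  assumes "z \<in> center" shows "inv z \<in> center"
proof -
  have z: "z \<in> carrier G" using assms by (simp add: center_def)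
  have "g \<otimes> inv z = inv z \<otimes> g" if g: "g \<in> carrier G" for g
  proof -
    have "inv z \<otimes> g = inv z \<otimes> (g \<otimes> z) \<otimes> inv z"
      using z g by (simp add: m_assoc)
    also have "\<dots> = inv z \<otimes> (z \<otimes> g) \<otimes> inv z"
      using assms g by (simp add: center_def)
    also have "\<dots> = g \<otimes> inv z"
      using z g by (simp add: m_assoc[symmetric])
    finally show ?thesis by simp
  qed
  then show ?thesis using z by (simp add: center_def)
qed

lemma mult_inv_cancel_left [simp]: "x \<in> carrier G \<Longrightarrow> y \<in> carrier G \<Longrightarrow> x \<otimes> (inv x \<otimes> y) = y"
  by (simp add: m_assoc[symmetric])

lemma inv_mult_cancel_left [simp]: "x \<in> carrier G \<Longrightarrow> y \<in> carrier G \<Longrightarrow> inv x \<otimes> (x \<otimes> y) = y"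
  by (simp add: m_assoc[symmetric])

lemma comm_closed [simp]: "x \<in> carrier G \<Longrightarrow> y \<in> carrier G \<Longrightarrow> comm G x y \<in> carrier G"
  by (simp add: comm_def)

lemma comm_eq_one_iff:
  assumes x: "x \<in> carrier G" and y: "y \<in> carrier G"
  shows "comm G x y = \<one> \<longleftrightarrow> x \<otimes> y = y \<otimes> x"
proof -
  have "comm G x y = inv (y \<otimes> x) \<otimes> (x \<otimes> y)"
    by (simp add: comm_def inv_mult_group x y m_assoc)
  then show ?thesis
    using x y inv_solve_left'[of "\<one>" "y \<otimes> x" "x \<otimes> y"] by simp
qed

lemma comm_center_eq_one: "g \<in> carrier G \<Longrightarrow> z \<in> center \<Longrightarrow> comm G g z = \<one>"
  by (simp add: center_def comm_eq_one_iff)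

lemma comm_mult_left:
  assumes x: "x \<in> carrier G" and z: "z \<in> carrier G" and y: "y \<in> carrier G"
    and c: "comm G x y \<in> center"
  shows "comm G (x \<otimes> z) y = comm G x y \<otimes> comm G z y"
proof -
  have "comm G (x \<otimes> z) y = inv z \<otimes> (comm G x y \<otimes> (inv y \<otimes> z \<otimes> y))"
    using x y z by (simp add: comm_def inv_mult_group m_assoc)
  also have "\<dots> = comm G z y \<otimes> comm G x y"
    using center_commute[OF c, of "inv y \<otimes> z \<otimes> y"] x y z by (simp add: comm_def m_assoc)
  also have "\<dots> = comm G x y \<otimes> comm G z y"
    using center_commute[OF c, of "comm G z y"] x y z by simp
  finally show ?thesis .
qed

lemma comm_mult_right:
  assumes g: "g \<in> carrier G" and a: "a \<in> carrier G" and b: "b \<in> carrier G"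
    and c: "comm G g a \<in> center"
  shows "comm G g (a \<otimes> b) = comm G g a \<otimes> comm G g b"
proof -
  have "comm G g (a \<otimes> b) = (inv g \<otimes> inv b \<otimes> g) \<otimes> comm G g a \<otimes> b"
    using g a b by (simp add: comm_def inv_mult_group m_assoc)
  also have "\<dots> = comm G g a \<otimes> comm G g b"
    using center_commute[OF c, of "inv g \<otimes> inv b \<otimes> g"] g a b by (simp add: comm_def m_assoc)
  finally show ?thesis .
qed

lemma comm_inv_right:
  assumes g: "g \<in> carrier G" and a: "a \<in> carrier G" and c: "comm G g a \<in> center"
  shows "comm G g (inv a) = inv (comm G g a)"
proof -
  have prod: "comm G g a \<otimes> comm G g (inv a) = \<one>"
    using comm_mult_right[OF g a inv_closed[OF a] c] g a by (simp add: comm_def m_assoc)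
  show ?thesis
    using inv_equality[OF inv_comm[OF prod]] g a by simp
qed

lemma subgroup_second_center: "subgroup second_center G"
proof (rule subgroupI)
  show "second_center \<subseteq> carrier G"
    by (auto simp: second_center_def)
  show "second_center \<noteq> {}"
    using one_in_center by (auto simp: second_center_def comm_def)
next
  fix a assume a: "a \<in> second_center"
  have "comm G g (inv a) \<in> center" if "g \<in> carrier G" for g
    using a that comm_inv_right center_inv by (simp add: second_center_def)
  then show "inv a \<in> second_center"
    using a by (simp add: second_center_def)
next
  fix a b assume a: "a \<in> second_center" and b: "b \<in> second_center"
  have "comm G g (a \<otimes> b) \<in> center" if "g \<in> carrier G" for g
    using a b that comm_mult_right center_mult by (simp add: second_center_def)
  then show "a \<otimes> b \<in> second_center"
    using a b by (simp add: second_center_def)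
qed

lemma comm_group_of_center: "carrier G \<subseteq> center \<Longrightarrow> comm_group G"
  by (intro group_comm_groupI) (auto simp: center_def)

lemma subgroup_lower_central: "subgroup (lower_central G k) G"
proof (induction k)
  case 0
  then show ?case by (simp add: subgroup_self)
next
  case (Suc k)
  have "{comm G g h | g h. g \<in> carrier G \<and> h \<in> lower_central G k} \<subseteq> carrier G"
    using subgroup.subset[OF Suc.IH] by auto
  then show ?case
    using generate_is_subgroup by simp
qed

lemma comm_in_lower_central:
  "g \<in> carrier G \<Longrightarrow> h \<in> lower_central G k \<Longrightarrow> comm G g h \<in> lower_central G (Suc k)"
  by (auto intro: generate.incl)

lemma lower_central_subset_center:
  assumes "lower_central G (Suc k) = {\<one>}" shows "lower_central G k \<subseteq> center"
proof
  fix h assume h: "h \<in> lower_central G k"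
  have hc: "h \<in> carrier G" using subgroup.mem_carrier[OF subgroup_lower_central h] .
  have "g \<otimes> h = h \<otimes> g" if g: "g \<in> carrier G" for g
    using comm_in_lower_central[OF g h] assms comm_eq_one_iff[OF g hc] by simp
  then show "h \<in> center" using hc by (simp add: center_def)
qed

lemma ex_noncentral_in_second_center:
  assumes nil: "lower_central G n = {\<one>}" and nonabelian: "\<not> comm_group G"
  shows "\<exists>a \<in> second_center. \<exists>g \<in> carrier G. comm G g a \<noteq> \<one>"
proof -
  define m where "m = (LEAST m. lower_central G m = {\<one>})"
  have m: "lower_central G m = {\<one>}"
    unfolding m_def using nil by (rule LeastI)
  have below_m: "lower_central G k \<noteq> {\<one>}" if "k < m" for k
    using not_less_Least[OF that[unfolded m_def]] by simp
  have "m \<noteq> 0"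
  proof
    assume "m = 0"
    then have "carrier G \<subseteq> center" using m one_in_center by simp
    then show False using nonabelian comm_group_of_center by blast
  qed
  moreover have "m \<noteq> 1"
  proof
    assume "m = 1"
    then have "carrier G \<subseteq> center" using m lower_central_subset_center[of 0] by simp
    then show False using nonabelian comm_group_of_center by blast
  qed
  ultimately obtain k where k: "m = Suc (Suc k)"
    by (metis One_nat_def old.nat.exhaust)
  have "\<exists>g \<in> carrier G. \<exists>h \<in> lower_central G k. comm G g h \<noteq> \<one>"
  proof (rule ccontr)
    assume "\<not> ?thesis"
    then have "{comm G g h | g h. g \<in> carrier G \<and> h \<in> lower_central G k} \<subseteq> {\<one>}"
      by blast
    then have "lower_central G (Suc k) \<subseteq> {\<one>}"
      using generate_subgroup_incl[OF _ triv_subgroup] by simp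
    moreover have "\<one> \<in> lower_central G (Suc k)"
      using subgroup.one_closed[OF subgroup_lower_central] .
    ultimately show False using below_m[of "Suc k"] k by blast
  qed
  then obtain g h where g: "g \<in> carrier G" and h: "h \<in> lower_central G k"
    and ne: "comm G g h \<noteq> \<one>" by blast
  have "comm G g' h \<in> center" if "g' \<in> carrier G" for g'
    using lower_central_subset_center[of "Suc k"] m k comm_in_lower_central[OF that h] by auto
  then have "h \<in> second_center"
    using subgroup.mem_carrier[OF subgroup_lower_central h] by (simp add: second_center_def)
  then show ?thesis using g ne by blast
qed

lemma mult_on_subgroup_inv:
  assumes H: "subgroup H G" and f_mult: "\<forall>x \<in> H. \<forall>y \<in> H. f (x \<otimes> y) = f x \<otimes> f y"
    and f_closed: "\<forall>x \<in> H. f x \<in> carrier G" and x: "x \<in> H"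
  shows "f (inv x) = inv (f x)"
proof -
  have one: "\<one> \<in> H" and inv_x: "inv x \<in> H" and xc: "x \<in> carrier G"
    using H x by (auto intro: subgroup.one_closed subgroup.m_inv_closed subgroup.mem_carrier)
  have "f \<one> \<otimes> f \<one> = f \<one>" using f_mult one by (metis l_one one_closed)
  then have f_one: "f \<one> = \<one>" using f_closed one l_cancel_one by blast
  have "f (inv x) \<otimes> f x = \<one>" using f_mult inv_x x xc f_one by (metis l_inv)
  then have "inv (f x) = f (inv x)" using f_closed x inv_x by (intro inv_equality) auto
  then show ?thesis by simp
qed

end

locale anti_involution = group G for G (structure) +
  fixes s :: "'a \<Rightarrow> 'a"
  assumes s_closed [simp]: "x \<in> carrier G \<Longrightarrow> s x \<in> carrier G"
    and s_mult: "x \<in> carrier G \<Longrightarrow> y \<in> carrier G \<Longrightarrow> s (x \<otimes> y) = s y \<otimes> s x"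
    and s_s [simp]: "x \<in> carrier G \<Longrightarrow> s (s x) = x"
begin

lemma s_inv [simp]:
  assumes x: "x \<in> carrier G" shows "s (inv x) = inv (s x)"
proof -
  have "s (inv x) \<otimes> s x = s \<one>" using s_mult[of x "inv x"] x by simp
  moreover have "s \<one> = \<one>"
    using s_mult[of \<one> \<one>] l_cancel_one[of "s \<one>" "s \<one>"] by simp
  ultimately show ?thesis using inv_equality[of "s (inv x)" "s x"] x by simp
qed

definition \<sigma> :: "'a \<Rightarrow> 'a" where
  "\<sigma> x = inv (s x)"

lemma \<sigma>_closed [simp]: "x \<in> carrier G \<Longrightarrow> \<sigma> x \<in> carrier G"
  by (simp add: \<sigma>_def)

lemma \<sigma>_mult: "x \<in> carrier G \<Longrightarrow> y \<in> carrier G \<Longrightarrow> \<sigma> (x \<otimes> y) = \<sigma> x \<otimes> \<sigma> y"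
  by (simp add: \<sigma>_def s_mult inv_mult_group)

lemma \<sigma>_\<sigma> [simp]: "x \<in> carrier G \<Longrightarrow> \<sigma> (\<sigma> x) = x"
  by (simp add: \<sigma>_def)

lemma \<sigma>_inv: "x \<in> carrier G \<Longrightarrow> \<sigma> (inv x) = inv (\<sigma> x)"
  by (simp add: \<sigma>_def)

lemma s_eq_inv_\<sigma>: "x \<in> carrier G \<Longrightarrow> s x = inv (\<sigma> x)"
  by (simp add: \<sigma>_def)

lemma \<sigma>_comm: "x \<in> carrier G \<Longrightarrow> y \<in> carrier G \<Longrightarrow> \<sigma> (comm G x y) = comm G (\<sigma> x) (\<sigma> y)"
  by (simp add: comm_def \<sigma>_mult \<sigma>_inv)

lemma \<sigma>_center:
  assumes z: "z \<in> center" shows "\<sigma> z \<in> center"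
proof -
  have zc: "z \<in> carrier G" using z by (simp add: center_def)
  have "g \<otimes> \<sigma> z = \<sigma> z \<otimes> g" if g: "g \<in> carrier G" for g
  proof -
    have "g \<otimes> \<sigma> z = \<sigma> (\<sigma> g \<otimes> z)" using g zc by (simp add: \<sigma>_mult)
    also have "\<dots> = \<sigma> (z \<otimes> \<sigma> g)" using center_commute[OF z, of "\<sigma> g"] g by simp
    also have "\<dots> = \<sigma> z \<otimes> g" using g zc by (simp add: \<sigma>_mult)
    finally show ?thesis .
  qed
  then show ?thesis using zc by (simp add: center_def)
qed

lemma \<sigma>_second_center:
  assumes y: "y \<in> second_center" shows "\<sigma> y \<in> second_center"
proof -
  have yc: "y \<in> carrier G" using y by (simp add: second_center_def)
  have "comm G g (\<sigma> y) \<in> center" if g: "g \<in> carrier G" for g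
  proof -
    have "comm G g (\<sigma> y) = \<sigma> (comm G (\<sigma> g) y)" using g yc by (simp add: \<sigma>_comm)
    then show ?thesis using \<sigma>_center y g by (simp add: second_center_def)
  qed
  then show ?thesis using yc by (simp add: second_center_def)
qed

definition \<sigma>_norm :: "'a \<Rightarrow> 'a" where
  "\<sigma>_norm x = x \<otimes> \<sigma> x"

lemma \<sigma>_norm_iter_in_subgroup:
  assumes "subgroup H G" "\<forall>x \<in> H. \<sigma> x \<in> H" "h \<in> H"
  shows "(\<sigma>_norm ^^ k) h \<in> H"
  using assms by (induction k) (auto simp: \<sigma>_norm_def subgroup.m_closed)

lemma \<sigma>_norm_iter_defect_in_lower_central:
  assumes h: "h \<in> carrier G"
  shows "inv ((\<sigma>_norm ^^ k) h) \<otimes> \<sigma> ((\<sigma>_norm ^^ k) h) \<in> lower_central G k"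
proof (induction k)
  case 0
  then show ?case using h by simp
next
  case (Suc k)
  define t where "t = (\<sigma>_norm ^^ k) h"
  have t: "t \<in> carrier G"
    unfolding t_def using \<sigma>_norm_iter_in_subgroup[OF subgroup_self] h by simp
  have "inv (\<sigma>_norm t) \<otimes> \<sigma> (\<sigma>_norm t) = inv (comm G t (inv t \<otimes> \<sigma> t))"
    using t by (simp add: \<sigma>_norm_def \<sigma>_mult comm_def inv_mult_group m_assoc)
  moreover have "comm G t (inv t \<otimes> \<sigma> t) \<in> lower_central G (Suc k)"
    using comm_in_lower_central[OF t] Suc.IH t_def by simp
  ultimately show ?case
    using subgroup.m_inv_closed[OF subgroup_lower_central] t_def
    by (simp del: lower_central.simps)
qed

lemma \<sigma>_norm_iter_fixed:
  assumes nil: "lower_central G n = {\<one>}" and h: "h \<in> carrier G"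
  shows "\<sigma> ((\<sigma>_norm ^^ n) h) = (\<sigma>_norm ^^ n) h"
proof -
  have t: "(\<sigma>_norm ^^ n) h \<in> carrier G"
    using \<sigma>_norm_iter_in_subgroup[OF subgroup_self] h by simp
  have "inv ((\<sigma>_norm ^^ n) h) \<otimes> \<sigma> ((\<sigma>_norm ^^ n) h) = \<one>"
    using \<sigma>_norm_iter_defect_in_lower_central[OF h, of n] nil by simp
  then show ?thesis using t inv_solve_left'[of \<one>] by simp
qed

lemma hom_\<sigma>_norm_iter:
  assumes H: "subgroup H G" "\<forall>x \<in> H. \<sigma> x \<in> H"
    and f_mult: "\<forall>x \<in> H. \<forall>y \<in> H. f (x \<otimes> y) = f x \<otimes> f y"
    and f_center: "\<forall>x \<in> H. f x \<in> center"
    and h: "h \<in> H" and f_\<sigma>: "f (\<sigma> h) = f h"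
  shows "f ((\<sigma>_norm ^^ k) h) = f h [^] (2 ^ k :: nat)"
proof -
  have "f (\<sigma> ((\<sigma>_norm ^^ k) h)) = f ((\<sigma>_norm ^^ k) h) \<and> f ((\<sigma>_norm ^^ k) h) = f h [^] (2 ^ k :: nat)"
  proof (induction k)
    case 0
    then show ?case using f_\<sigma> h H f_center center_subset_carrier by auto
  next
    case (Suc k)
    define t where "t = (\<sigma>_norm ^^ k) h"
    have t: "t \<in> H" "\<sigma> t \<in> H"
      using \<sigma>_norm_iter_in_subgroup[OF H h] H(2) unfolding t_def by blast+
    have tc: "t \<in> carrier G" "\<sigma> t \<in> carrier G"
      using t subgroup.mem_carrier[OF H(1)] by blast+
    have IH: "f (\<sigma> t) = f t" "f t = f h [^] (2 ^ k :: nat)"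
      using Suc.IH unfolding t_def by blast+
    have "f (\<sigma>_norm t) = f t \<otimes> f t"
      using f_mult t IH by (simp add: \<sigma>_norm_def)
    moreover have "f (\<sigma> (\<sigma>_norm t)) = f t \<otimes> f t"
      using f_mult t tc IH by (simp add: \<sigma>_norm_def \<sigma>_mult)
    moreover have "f t \<otimes> f t = f h [^] (2 ^ Suc k :: nat)"
      using IH nat_pow_mult[of "f h"] h f_center center_subset_carrier by (auto simp: mult_2)
    moreover have "(\<sigma>_norm ^^ Suc k) h = \<sigma>_norm t"
      by (simp add: t_def)
    ultimately show ?case by simp
  qed
  then show ?thesis ..
qed

lemma ex_s_stable_outside_kernel:
  assumes nil: "lower_central G n = {\<one>}" and tf: "torsion_free_group G"
    and H: "subgroup H G" "\<forall>x \<in> H. \<sigma> x \<in> H"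
    and f_mult: "\<forall>x \<in> H. \<forall>y \<in> H. f (x \<otimes> y) = f x \<otimes> f y"
    and f_center: "\<forall>x \<in> H. f x \<in> center"
    and h: "h \<in> H" and fh: "f h \<noteq> \<one>"
  shows "\<exists>x \<in> H. s x \<in> {x, inv x} \<and> f x \<noteq> \<one>"
proof -
  have hc: "h \<in> carrier G" using subgroup.mem_carrier[OF H(1) h] .
  have f_closed: "\<forall>x \<in> H. f x \<in> carrier G" using f_center center_subset_carrier by blast
  show ?thesis
  proof (cases "f (\<sigma> h) = f h")
    case True
    let ?t = "(\<sigma>_norm ^^ n) h"
    have t: "?t \<in> H" "?t \<in> carrier G"
      using \<sigma>_norm_iter_in_subgroup[OF H h] subgroup.mem_carrier[OF H(1)] by blast+
    have "s ?t = inv ?t"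
      using s_eq_inv_\<sigma>[OF t(2)] \<sigma>_norm_iter_fixed[OF nil hc] by simp
    then have "s ?t \<in> {?t, inv ?t}" by simp
    moreover have "f ?t \<noteq> \<one>"
    proof
      assume "f ?t = \<one>"
      then have "f h [^] (2 ^ n :: nat) = \<one>"
        using hom_\<sigma>_norm_iter[OF H f_mult f_center h True] by simp
      moreover have "(0::nat) < 2 ^ n" by simp
      ultimately show False
        using tf fh f_closed h unfolding torsion_free_group_def by blast
    qed
    ultimately show ?thesis using t(1) by auto
  next
    case False
    let ?v = "h \<otimes> s h"
    have inv_\<sigma>h: "inv (\<sigma> h) \<in> H" using subgroup.m_inv_closed[OF H(1)] H(2) h by simp
    have v: "?v \<in> H"
      using subgroup.m_closed[OF H(1) h inv_\<sigma>h] s_eq_inv_\<sigma>[OF hc] by simp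
    have "f ?v = f h \<otimes> inv (f (\<sigma> h))"
      using f_mult h inv_\<sigma>h s_eq_inv_\<sigma>[OF hc] mult_on_subgroup_inv[OF H(1) f_mult f_closed] H(2)
      by simp
    then have "f ?v \<noteq> \<one>"
      using False inv_solve_right'[of \<one> "f h" "f (\<sigma> h)"] f_closed h H(2) by simp
    moreover have "s ?v = ?v" using hc by (simp add: s_mult)
    ultimately show ?thesis using v by auto
  qed
qed

end


theorem proposition2p4:
  fixes G (structure) and s :: "'a \<Rightarrow> 'a"
  assumes "group G"
    and "nilpotent_group G"
    and "torsion_free_group G"
    and "\<not> comm_group G"
    and "involution G s"
  shows "\<exists>x \<in> carrier G. \<exists>y \<in> carrier G.
           comm G x y \<noteq> \<one> \<and>
           comm G x (comm G x y) = \<one> \<and>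
           comm G y (comm G x y) = \<one> \<and>
           s x \<in> {x, inv x} \<and> s y \<in> {y, inv y}"
proof -
  interpret anti_involution G s
    using assms(1,5) unfolding involution_def anti_involution_def anti_involution_axioms_def
    by auto
  obtain n where nil: "lower_central G n = {\<one>}"
    using assms(2) unfolding nilpotent_group_def by blast
  obtain a g where a: "a \<in> second_center" and g: "g \<in> carrier G" "comm G g a \<noteq> \<one>"
    using ex_noncentral_in_second_center[OF nil assms(4)] by blast
  have Z2_carrier: "\<And>y. y \<in> second_center \<Longrightarrow> y \<in> carrier G"
    and Z2_comm: "\<And>y g. y \<in> second_center \<Longrightarrow> g \<in> carrier G \<Longrightarrow> comm G g y \<in> center"
    by (simp_all add: second_center_def)
  have "\<forall>y \<in> second_center. \<sigma> y \<in> second_center"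
    and "\<forall>y \<in> second_center. \<forall>z \<in> second_center. comm G g (y \<otimes> z) = comm G g y \<otimes> comm G g z"
    and "\<forall>y \<in> second_center. comm G g y \<in> center"
    using \<sigma>_second_center comm_mult_right[OF g(1)] Z2_carrier Z2_comm g(1) by blast+
  from ex_s_stable_outside_kernel[OF nil assms(3) subgroup_second_center this a g(2)]
  obtain y where y: "y \<in> second_center" "s y \<in> {y, inv y}" "comm G g y \<noteq> \<one>"
    by blast
  have "\<forall>x \<in> carrier G. \<sigma> x \<in> carrier G"
    and "\<forall>x \<in> carrier G. \<forall>z \<in> carrier G. comm G (x \<otimes> z) y = comm G x y \<otimes> comm G z y"
    and "\<forall>x \<in> carrier G. comm G x y \<in> center"
    using comm_mult_left Z2_carrier Z2_comm y(1) by auto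
  from ex_s_stable_outside_kernel[OF nil assms(3) subgroup_self this g(1) y(3)]
  obtain x where x: "x \<in> carrier G" "s x \<in> {x, inv x}" "comm G x y \<noteq> \<one>"
    by blast
  have "comm G x y \<in> center" using Z2_comm[OF y(1) x(1)] .
  then show ?thesis
    using x y(1,2) Z2_carrier comm_center_eq_one by blast
qed

end
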